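(* Let $u\equiv 0\pmod{12}$ and $v\equiv 2,4\pmod 6$. Then $\Phi(u\times v,4,2)\le\left\lfloor\frac{u}{4}\left(\left\lfloor\frac{uv-1}{3}\left\lfloor\frac{uv-2}{2}\right\rfloor\right\rfloor-1\right)\right\rfloor-1$.
   Context: A 2-D $(u\times v,4,2)$-OOC is a family $\mathcal C$ of $u\times v$ $(0,1)$-matrices of Hamming weight $4$ such that for all $A=(a_{ij}),B=(b_{ij})\in\mathcal C$ and integers $r$ with $A\ne B$ or $r\not\equiv0\pmod v$, $\sum_{i,j}a_{ij}b_{i,j+r}\le 2$ (column indices mod $v$). $\Phi(u\times v,4,2)$ is the largest size of such a code. *)

theory Defs
  imports Complex_Main
begin

definition is01mat :: "nat \<Rightarrow> nat \<Rightarrow> (nat \<Rightarrow> nat \<Rightarrow> nat) \<Rightarrow> bool" where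
  "is01mat u v A \<longleftrightarrow>
     (\<forall>i j. A i j \<in> {0, 1}) \<and> (\<forall>i j. (i \<ge> u \<or> j \<ge> v) \<longrightarrow> A i j = 0)"

definition hweight :: "nat \<Rightarrow> nat \<Rightarrow> (nat \<Rightarrow> nat \<Rightarrow> nat) \<Rightarrow> nat" where
  "hweight u v A = (\<Sum>i<u. \<Sum>j<v. A i j)"

definition corr :: "nat \<Rightarrow> nat \<Rightarrow> (nat \<Rightarrow> nat \<Rightarrow> nat) \<Rightarrow> (nat \<Rightarrow> nat \<Rightarrow> nat) \<Rightarrow> int \<Rightarrow> nat" where
  "corr u v A B r = (\<Sum>i<u. \<Sum>j<v. A i j * B i (nat ((int j + r) mod int v)))"

definition is_OOC :: "nat \<Rightarrow> nat \<Rightarrow> (nat \<Rightarrow> nat \<Rightarrow> nat) set \<Rightarrow> bool" where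
  "is_OOC u v C \<longleftrightarrow>
     (\<forall>A\<in>C. is01mat u v A \<and> hweight u v A = 4) \<and>
     (\<forall>A\<in>C. \<forall>B\<in>C. \<forall>r::int. (A \<noteq> B \<or> \<not> (r mod int v = 0)) \<longrightarrow> corr u v A B r \<le> 2)"

definition Phi :: "nat \<Rightarrow> nat \<Rightarrow> nat" where
  "Phi u v = Max {card C | C. is_OOC u v C}"

end

theory Submission
  imports Defs "HOL-Number_Theory.Cong"
begin

text \<open>Regard the supports of the code matrices as 4-subsets of the \<open>n = uv\<close> grid points and
  close them under all \<open>v\<close> cyclic column shifts.  The correlation condition says that two
  distinct shifted blocks meet in at most two points, so every triple of points lies in at most
  one block.  Counting the uncovered triples (the leave) through a point \<open>x\<close> and through a
  pair \<open>{x, y}\<close> gives \<open>C(n-1,2) - 3\<lambda>(x)\<close> and \<open>n - 2 - 2\<lambda>(x,y)\<close>.  Since \<open>3 | n\<close>, every leave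
  degree is \<open>1 (mod 3)\<close>; the half-turn shift by \<open>v/2\<close> pairs off the blocks through
  \<open>{x, x + v/2}\<close>, so, as \<open>4 | n\<close>, that pair lies in at least two leave triples, and every leave
  degree is at least 4.  Summing \<open>3\<lambda>\<close> over one column gives \<open>12|C| \<le> u (C(n-1,2) - 4)\<close>.
  Equality would make the leave a triple system in which every degree is 4, every pair has even
  codegree, and the half-turn is an automorphism whose pairs \<open>{x, x + v/2}\<close> are covered; a local
  analysis of the triples through one point shows that no such system exists.\<close>

lemma even_card_if_fixpoint_free_involution:
  assumes "finite S" and "\<And>x. x \<in> S \<Longrightarrow> f x \<in> S \<and> f x \<noteq> x \<and> f (f x) = x"
  shows "even (card S)"
  using assms
proof (induction "card S" arbitrary: S rule: less_induct)
  case less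
  show ?case
  proof (cases "S = {}")
    case False
    then obtain x where x: "x \<in> S" by blast
    have fx: "f x \<in> S" "f x \<noteq> x" "f (f x) = x" using less.prems(2)[OF x] by auto
    define S' where "S' = S - {x, f x}"
    have card_S: "card S = card S' + 2"
      using x fx less.prems(1) card_mono[of S "{x, f x}"] unfolding S'_def
      by (simp add: card_Diff_subset)
    have "even (card S')"
    proof (rule less.hyps)
      show "card S' < card S" "finite S'" using card_S less.prems(1) S'_def by simp_all
      fix y assume "y \<in> S'"
      then have y: "y \<in> S" "y \<noteq> x" "y \<noteq> f x" unfolding S'_def by auto
      with less.prems(2)[OF y(1)] fx show "f y \<in> S' \<and> f y \<noteq> y \<and> f (f y) = y"
        unfolding S'_def by (metis Diff_iff insertE singletonD)
    qed
    then show ?thesis using card_S by simp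
  qed simp
qed

lemma card_supersets_of_card:
  assumes "finite X" "Q \<subseteq> X" "card Q \<le> k"
  shows "card {T. T \<subseteq> X \<and> card T = k \<and> Q \<subseteq> T} = (card X - card Q) choose (k - card Q)"
proof -
  have "finite Q" using assms finite_subset by blast
  have "bij_betw (\<lambda>T. T - Q) {T. T \<subseteq> X \<and> card T = k \<and> Q \<subseteq> T} {S. S \<subseteq> X - Q \<and> card S = k - card Q}"
  proof (rule bij_betw_byWitness[where f' = "\<lambda>S. S \<union> Q"])
    show "(\<lambda>T. T - Q) ` {T. T \<subseteq> X \<and> card T = k \<and> Q \<subseteq> T} \<subseteq> {S. S \<subseteq> X - Q \<and> card S = k - card Q}"
      using \<open>finite Q\<close> by (auto simp: card_Diff_subset)
    show "(\<lambda>S. S \<union> Q) ` {S. S \<subseteq> X - Q \<and> card S = k - card Q} \<subseteq> {T. T \<subseteq> X \<and> card T = k \<and> Q \<subseteq> T}"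
    proof clarify
      fix S assume S: "S \<subseteq> X - Q" "card S = k - card Q"
      have "finite S" using S assms(1) finite_subset by blast
      then have "card (S \<union> Q) = card S + card Q" using S \<open>finite Q\<close> by (subst card_Un_disjoint) auto
      then show "S \<union> Q \<subseteq> X \<and> card (S \<union> Q) = k \<and> Q \<subseteq> S \<union> Q" using S assms by auto
    qed
  qed auto
  then have "card {T. T \<subseteq> X \<and> card T = k \<and> Q \<subseteq> T} = card {S. S \<subseteq> X - Q \<and> card S = k - card Q}"
    by (rule bij_betw_same_card)
  also have "\<dots> = card (X - Q) choose (k - card Q)" using assms(1) by (simp add: n_subsets)
  finally show ?thesis using assms \<open>finite Q\<close> by (simp add: card_Diff_subset)
qed

lemma add_mod_eq_iff:
  fixes j t c v :: nat
  assumes "j < v" "t < v" "c < v"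
  shows "(j + t) mod v = c \<longleftrightarrow> j = (c + v - t) mod v"
proof -
  have "(j + t) mod v = c \<longleftrightarrow> [j + t = (c + v - t) + t] (mod v)"
    using assms(2,3) by (simp add: cong_def)
  also have "\<dots> \<longleftrightarrow> [j = c + v - t] (mod v)" by (rule cong_add_rcancel_nat)
  also have "\<dots> \<longleftrightarrow> j = (c + v - t) mod v" using assms(1) by (simp add: cong_def)
  finally show ?thesis .
qed

lemma add_mod_eq_add_mod_iff:
  fixes j k s t v :: nat
  assumes "k < v"
  shows "(j + s) mod v = (k + t) mod v \<longleftrightarrow> int k = (int j + (int s - int t)) mod int v"
proof -
  have "(j + s) mod v = (k + t) mod v \<longleftrightarrow> [int j + int s = int k + int t] (mod int v)"
    by (metis cong_def cong_int_iff of_nat_add)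
  also have "\<dots> \<longleftrightarrow> [int j + (int s - int t) = int k] (mod int v)"
    by (simp add: cong_iff_dvd_diff algebra_simps)
  also have "\<dots> \<longleftrightarrow> int k = (int j + (int s - int t)) mod int v"
    using assms by (auto simp: cong_def)
  finally show ?thesis .
qed

lemma choose_two_mod_three:
  fixes n :: nat
  assumes "3 dvd n" "0 < n"
  shows "((n - 1) choose 2) mod 3 = 1"
proof -
  obtain m where m: "n = 3 * m" using assms(1) by (rule dvdE)
  define k where "k = m - 1"
  have k: "n = 3 * k + 3" using m assms(2) unfolding k_def by (cases m) auto
  have "even (k * (k + 1))" by simp
  then obtain j where j: "k * (k + 1) = 2 * j" by (rule evenE)
  have "(3 * k + 2) * (3 * k + 1) = 2 * (9 * j + 1)" using j by (simp add: algebra_simps)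
  then have "(n - 1) choose 2 = 9 * j + 1" using k by (simp add: choose_two)
  then show ?thesis by presburger
qed

lemma floor_choose_two_div_three:
  fixes n :: nat
  assumes "even n" "2 \<le> n"
  shows "\<lfloor>(real n - 1) / 3 * real_of_int \<lfloor>(real n - 2) / 2\<rfloor>\<rfloor> = int (((n - 1) choose 2) div 3)"
proof -
  obtain k where k: "n = 2 * k" using assms(1) by (rule evenE)
  define m where "m = k - 1"
  have m: "n = 2 * m + 2" using k assms(2) unfolding m_def by (cases k) auto
  have "(n - 1) choose 2 = (2 * m + 1) * m" using m by (simp add: choose_two)
  then have "(real n - 1) / 3 * real_of_int \<lfloor>(real n - 2) / 2\<rfloor> = real ((n - 1) choose 2) / real 3"
    using m by (simp add: field_simps)
  then show ?thesis using floor_divide_of_nat_eq[of "(n - 1) choose 2" 3] by simp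
qed

text \<open>In a system satisfying the axioms below, the link of each point \<open>x\<close> (the pairs \<open>{y, z}\<close> with \<open>{x, y, z} \<in> U\<close>) is a
  4-cycle through \<open>\<sigma> x\<close>; following these links from one point to a neighbour produces a pair of
  points lying in exactly one triple.\<close>

locale quartic_even_triple_system =
  fixes U :: "'a set set" and P :: "'a set" and \<sigma> :: "'a \<Rightarrow> 'a"
  assumes finite_U: "finite U"
    and triple: "T \<in> U \<Longrightarrow> card T = 3 \<and> T \<subseteq> P"
    and involution: "x \<in> P \<Longrightarrow> \<sigma> x \<in> P \<and> \<sigma> (\<sigma> x) = x \<and> \<sigma> x \<noteq> x"
    and image_mem: "T \<in> U \<Longrightarrow> \<sigma> ` T \<in> U"
    and degree: "x \<in> P \<Longrightarrow> card {T\<in>U. x \<in> T} = 4"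
    and codegree_even: "x \<in> P \<Longrightarrow> y \<in> P \<Longrightarrow> x \<noteq> y \<Longrightarrow> even (card {T\<in>U. x \<in> T \<and> y \<in> T})"
    and partner_covered: "x \<in> P \<Longrightarrow> \<exists>T\<in>U. x \<in> T \<and> \<sigma> x \<in> T"
begin

lemma triple_points:
  assumes "T \<in> U" "x \<in> T"
  obtains y z where "T = {x, y, z}" "y \<noteq> x" "z \<noteq> x" "y \<noteq> z"
proof -
  have "card T = 3" using triple[OF assms(1)] by simp
  then obtain a b c where T: "T = {a, b, c}" "a \<noteq> b" "b \<noteq> c" "a \<noteq> c"
    unfolding card_3_iff by blast
  from assms(2) T(1) consider "x = a" | "x = b" | "x = c" by blast
  then show ?thesis
  proof cases
    case 1 with T that[of b c] show ?thesis by simp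
  next
    case 2 with T that[of a c] show ?thesis by (simp add: insert_commute)
  next
    case 3 with T that[of a b] show ?thesis by (simp add: insert_commute)
  qed
qed

lemma triple_third_point:
  assumes "T \<in> U" "x \<in> T" "y \<in> T" "x \<noteq> y"
  obtains z where "T = {x, y, z}" "z \<noteq> x" "z \<noteq> y" "z \<in> P"
proof -
  obtain a b where T: "T = {x, a, b}" "a \<noteq> x" "b \<noteq> x" "a \<noteq> b"
    using triple_points[OF assms(1,2)] .
  have "T \<subseteq> P" using triple[OF assms(1)] by blast
  from assms(3,4) T(1) consider "y = a" | "y = b" by blast
  then show ?thesis
  proof cases
    case 1 with T \<open>T \<subseteq> P\<close> that[of b] show ?thesis by simp
  next
    case 2 with T \<open>T \<subseteq> P\<close> that[of a] show ?thesis by (simp add: insert_commute)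
  qed
qed

lemma triple_distinct:
  assumes "{x, y, z} \<in> U"
  shows "x \<noteq> y" "x \<noteq> z" "y \<noteq> z" "x \<in> P" "y \<in> P" "z \<in> P"
proof -
  have "card {x, y, z} = 3" using triple[OF assms] by simp
  then show "x \<noteq> y" "x \<noteq> z" "y \<noteq> z" by (auto simp: card_insert_if split: if_splits)
  show "x \<in> P" "y \<in> P" "z \<in> P" using triple[OF assms] by auto
qed

lemma codegree_not_one:
  assumes "x \<in> P" "y \<in> P" "x \<noteq> y"
  shows "{T\<in>U. x \<in> T \<and> y \<in> T} \<noteq> {T0}"
  using codegree_even[OF assms] by fastforce

lemma second_triple_through_pair:
  assumes "x \<in> P" "y \<in> P" "x \<noteq> y" "T \<in> U" "x \<in> T" "y \<in> T"
  obtains T' where "T' \<in> U" "x \<in> T'" "y \<in> T'" "T' \<noteq> T"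
  using codegree_not_one[OF assms(1-3), of T] assms(4-6) by blast

lemma triples_through_eq:
  assumes "x \<in> P" "{A, B, C, D} \<subseteq> U" "x \<in> A" "x \<in> B" "x \<in> C" "x \<in> D"
    and "distinct [A, B, C, D]"
  shows "{T\<in>U. x \<in> T} = {A, B, C, D}"
proof -
  have "{A, B, C, D} \<subseteq> {T\<in>U. x \<in> T}" using assms(2-6) by blast
  moreover have "card {A, B, C, D} = card {T\<in>U. x \<in> T}"
    using assms(7) degree[OF assms(1)] by simp
  moreover have "finite {T\<in>U. x \<in> T}" using finite_U by simp
  ultimately show ?thesis using card_subset_eq[of "{T\<in>U. x \<in> T}" "{A, B, C, D}"] by simp
qed

lemma sigma_mem: "x \<in> P \<Longrightarrow> \<sigma> x \<in> P"
  and sigma_sigma: "x \<in> P \<Longrightarrow> \<sigma> (\<sigma> x) = x"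
  and sigma_neq: "x \<in> P \<Longrightarrow> \<sigma> x \<noteq> x"
  using involution by auto

lemma sigma_eq_iff: "x \<in> P \<Longrightarrow> y \<in> P \<Longrightarrow> \<sigma> x = y \<longleftrightarrow> x = \<sigma> y"
  using sigma_sigma by auto

lemma partner_triples:
  assumes "x \<in> P"
  obtains w where "w \<in> P" "{x, \<sigma> x, w} \<in> U" "{x, \<sigma> x, \<sigma> w} \<in> U"
proof -
  obtain T where T: "T \<in> U" "x \<in> T" "\<sigma> x \<in> T" using partner_covered[OF assms] by blast
  obtain w where w: "T = {x, \<sigma> x, w}" "w \<in> P"
    using triple_third_point[OF T sigma_neq[OF assms, symmetric]] by metis
  have "\<sigma> ` T = {\<sigma> x, x, \<sigma> w}" using w(1) sigma_sigma[OF assms] by simp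
  then have "{x, \<sigma> x, \<sigma> w} \<in> U" using image_mem[OF T(1)] by (simp add: insert_commute)
  with that T w show ?thesis by simp
qed

lemma partner_neighbours_not_joined:
  assumes "b \<in> P" "{b, \<sigma> b, w} \<in> U"
  shows "{b, w, \<sigma> w} \<notin> U"
proof
  define c w' where "c = \<sigma> b" and "w' = \<sigma> w"
  assume bad: "{b, w, w'} \<in> U"
  have bcw: "{b, c, w} \<in> U" using assms(2) unfolding c_def .
  have w: "w \<noteq> b" "w \<noteq> c" "c \<noteq> b" "w \<in> P" using triple_distinct[OF bcw] by auto
  have w': "w' \<noteq> b" "w' \<noteq> c" "w' \<noteq> w"
    using sigma_eq_iff[OF w(4) assms(1)] sigma_eq_iff[OF w(4) sigma_mem[OF assms(1)]]
      sigma_sigma[OF assms(1)] sigma_neq[OF w(4)] w(1,2) unfolding c_def w'_def by auto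
  have "\<sigma> ` {b, c, w} = {c, b, w'}" using sigma_sigma[OF assms(1)] unfolding c_def w'_def by simp
  then have partner2: "{b, c, w'} \<in> U" using image_mem[OF bcw] by (simp add: insert_commute)
  have "\<not> {T\<in>U. b \<in> T} \<subseteq> {{b, c, w}, {b, c, w'}, {b, w, w'}}"
  proof
    assume "{T\<in>U. b \<in> T} \<subseteq> {{b, c, w}, {b, c, w'}, {b, w, w'}}"
    then have "card {T\<in>U. b \<in> T} \<le> card {{b, c, w}, {b, c, w'}, {b, w, w'}}"
      by (simp add: card_mono)
    also have "\<dots> \<le> 3" by (simp add: card_insert_le_m1)
    finally show False using degree[OF assms(1)] by simp
  qed
  then obtain T where T: "T \<in> U" "b \<in> T" and T_new: "T \<notin> {{b, c, w}, {b, c, w'}, {b, w, w'}}"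
    by blast
  obtain y z where yz: "T = {b, y, z}" "y \<noteq> b" "z \<noteq> b" "y \<noteq> z"
    using triple_points[OF T] .
  have "y \<notin> {c, w, w'} \<or> z \<notin> {c, w, w'}"
    using yz T_new by (auto simp: insert_commute)
  then obtain p where p: "p \<in> T" "p \<notin> {b, c, w, w'}"
    using yz by blast
  have "p \<in> P" using p triple[OF T(1)] by blast
  have "{b, c, w} \<noteq> {b, c, w'}" "{b, c, w} \<noteq> {b, w, w'}" "{b, c, w'} \<noteq> {b, w, w'}"
    using w w' by blast+
  then have "distinct [{b, c, w}, {b, c, w'}, {b, w, w'}, T]"
    using T_new by auto
  then have "{T\<in>U. b \<in> T} = {{b, c, w}, {b, c, w'}, {b, w, w'}, T}"
    using triples_through_eq[OF assms(1)] bcw partner2 bad T by simp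
  then have "{T'\<in>U. b \<in> T' \<and> p \<in> T'} = {T'\<in>{{b, c, w}, {b, c, w'}, {b, w, w'}, T}. p \<in> T'}"
    by blast
  also have "\<dots> = {T}" using p by auto
  finally show False using codegree_not_one[OF assms(1) \<open>p \<in> P\<close>] p(2) by blast
qed

lemma second_triple_through_neighbour:
  assumes "b \<in> P" "{b, \<sigma> b, w} \<in> U"
  obtains q where "{b, w, q} \<in> U" "q \<in> P" "q \<notin> {b, \<sigma> b, w, \<sigma> w}"
proof -
  have w: "w \<noteq> b" "w \<noteq> \<sigma> b" "w \<in> P" using triple_distinct[OF assms(2)] by auto
  obtain T where T: "T \<in> U" "b \<in> T" "w \<in> T" "T \<noteq> {b, \<sigma> b, w}"
    using second_triple_through_pair[OF assms(1) w(3) w(1)[symmetric] assms(2)] by blast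
  obtain q where q: "T = {b, w, q}" "q \<noteq> b" "q \<noteq> w" "q \<in> P"
    using triple_third_point[OF T(1-3) w(1)[symmetric]] .
  have "q \<noteq> \<sigma> b"
  proof
    assume "q = \<sigma> b"
    then have "T = {b, \<sigma> b, w}" using q(1) by (simp add: insert_commute)
    with T(4) show False by contradiction
  qed
  moreover have "q \<noteq> \<sigma> w" using partner_neighbours_not_joined[OF assms] T(1) q(1) by blast
  ultimately show ?thesis using that T(1) q by blast
qed

lemma link_of_point:
  assumes "b \<in> P"
  obtains w q where "{T\<in>U. b \<in> T} = {{b, \<sigma> b, w}, {b, \<sigma> b, \<sigma> w}, {b, w, q}, {b, \<sigma> w, q}}"
    "w \<in> P" "w \<notin> {b, \<sigma> b}" "q \<in> P" "q \<notin> {b, \<sigma> b, w, \<sigma> w}"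
proof -
  obtain w where w: "w \<in> P" "{b, \<sigma> b, w} \<in> U" "{b, \<sigma> b, \<sigma> w} \<in> U"
    using partner_triples[OF assms] .
  obtain q where q: "{b, w, q} \<in> U" "q \<in> P" "q \<notin> {b, \<sigma> b, w, \<sigma> w}"
    using second_triple_through_neighbour[OF assms w(2)] .
  obtain q' where q': "{b, \<sigma> w, q'} \<in> U" "q' \<in> P" "q' \<notin> {b, \<sigma> b, \<sigma> w, w}"
    using second_triple_through_neighbour[OF assms w(3)] sigma_sigma[OF w(1)] by auto
  define c w' where "c = \<sigma> b" and "w' = \<sigma> w"
  have ne: "w \<noteq> b" "w \<noteq> c" "c \<noteq> b" "w' \<noteq> b" "w' \<noteq> c" "w' \<noteq> w"
    using triple_distinct[OF w(2)] triple_distinct[OF w(3)] sigma_neq[OF w(1)]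
    unfolding c_def w'_def by auto
  have "{b, c, w} \<noteq> {b, c, w'}" "{b, c, w} \<noteq> {b, w, q}" "{b, c, w} \<noteq> {b, w', q'}"
    "{b, c, w'} \<noteq> {b, w, q}" "{b, c, w'} \<noteq> {b, w', q'}" "{b, w, q} \<noteq> {b, w', q'}"
    using ne q(3) q'(3) unfolding c_def w'_def by blast+
  then have "distinct [{b, c, w}, {b, c, w'}, {b, w, q}, {b, w', q'}]" by simp
  then have star: "{T\<in>U. b \<in> T} = {{b, c, w}, {b, c, w'}, {b, w, q}, {b, w', q'}}"
    by (rule triples_through_eq[OF assms, rotated -1]) (use w(2,3) q(1) q'(1) c_def w'_def in auto)
  have "q = q'"
  proof (rule ccontr)
    assume "q \<noteq> q'"
    then have "{T\<in>U. b \<in> T \<and> q \<in> T} = {{b, w, q}}"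
      using star q(3) unfolding c_def w'_def by blast
    then show False using codegree_not_one[OF assms q(2)] q(3) by blast
  qed
  then show ?thesis using that star w(1) ne q unfolding c_def w'_def by blast
qed

lemma partner_triple_of_opposite_point:
  assumes "b \<in> P" "w \<in> P" "q \<in> P" "w \<notin> {b, \<sigma> b}" "q \<notin> {b, \<sigma> b, w, \<sigma> w}"
    and "{b, w, q} \<in> U" "{b, \<sigma> w, q} \<in> U"
  shows "{q, \<sigma> q, w} \<in> U"
proof -
  define w' d where "w' = \<sigma> w" and "d = \<sigma> q"
  have ne: "w' \<noteq> w" "d \<noteq> b" "d \<noteq> w" "d \<noteq> w'" "d \<noteq> q" "w \<noteq> b" "w' \<noteq> b" "w \<noteq> q" "w' \<noteq> q"
    using assms(4,5) sigma_eq_iff[OF assms(3)] sigma_mem sigma_sigma[OF assms(2)]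
      sigma_neq[OF assms(2)] sigma_neq[OF assms(3)] assms(1,2)
    unfolding w'_def d_def by auto
  obtain s where s: "{q, d, s} \<in> U" "{q, d, \<sigma> s} \<in> U" "s \<in> P"
    using partner_triples[OF assms(3)] unfolding d_def by blast
  have ne_s: "s \<noteq> q" "s \<noteq> d" "s \<noteq> \<sigma> s"
    using triple_distinct[OF s(1)] sigma_neq[OF s(3)] by auto
  have "{b, w, q} \<noteq> {b, w', q}" "{b, w, q} \<noteq> {q, d, s}" "{b, w, q} \<noteq> {q, d, \<sigma> s}"
    "{b, w', q} \<noteq> {q, d, s}" "{b, w', q} \<noteq> {q, d, \<sigma> s}" "{q, d, s} \<noteq> {q, d, \<sigma> s}"
    using ne ne_s by blast+
  then have "distinct [{b, w, q}, {b, w', q}, {q, d, s}, {q, d, \<sigma> s}]" by simp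
  then have star: "{T\<in>U. q \<in> T} = {{b, w, q}, {b, w', q}, {q, d, s}, {q, d, \<sigma> s}}"
    by (rule triples_through_eq[OF assms(3), rotated -1]) (use assms(6,7) s(1,2) w'_def in auto)
  obtain T where T: "T \<in> U" "q \<in> T" "w \<in> T" "T \<noteq> {b, w, q}"
    using second_triple_through_pair[OF assms(3,2) ne(8)[symmetric] assms(6)] by blast
  have "T = {q, d, s} \<or> T = {q, d, \<sigma> s}" using star T ne by blast
  then have "w = s \<or> w = \<sigma> s" using T(3) ne by blast
  then show ?thesis using s(1,2) unfolding d_def by (auto simp: insert_commute)
qed

theorem no_points: "P = {}"
proof (rule ccontr)
  assume "P \<noteq> {}"
  then obtain b where b: "b \<in> P" by blast
  obtain w q where star_b: "{T\<in>U. b \<in> T} = {{b, \<sigma> b, w}, {b, \<sigma> b, \<sigma> w}, {b, w, q}, {b, \<sigma> w, q}}"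
    and w: "w \<in> P" "w \<notin> {b, \<sigma> b}" and q: "q \<in> P" "q \<notin> {b, \<sigma> b, w, \<sigma> w}"
    using link_of_point[OF b] .
  have bwq: "{b, w, q} \<in> U" "{b, \<sigma> w, q} \<in> U" using star_b by blast+
  have qdw: "{q, \<sigma> q, w} \<in> U" using partner_triple_of_opposite_point[OF b w(1) q(1) w(2) q(2) bwq] .
  obtain T where T: "T \<in> U" "w \<in> T" "\<sigma> w \<in> T" using partner_covered[OF w(1)] by blast
  obtain z where z: "T = {w, \<sigma> w, z}" "z \<noteq> w" "z \<noteq> \<sigma> w"
    using triple_third_point[OF T sigma_neq[OF w(1), symmetric]] by metis
  define c w' d where "c = \<sigma> b" and "w' = \<sigma> w" and "d = \<sigma> q"
  have ne: "c \<noteq> b" "c \<noteq> w" "c \<noteq> q" "w' \<noteq> b" "w' \<noteq> c" "w' \<noteq> w" "w' \<noteq> q"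
    "d \<noteq> b" "d \<noteq> c" "d \<noteq> w" "d \<noteq> w'" "d \<noteq> q" "w \<noteq> b" "q \<noteq> b" "q \<noteq> w"
    using w q sigma_eq_iff[OF q(1)] sigma_eq_iff[OF w(1)] sigma_mem sigma_sigma b
      sigma_neq[OF b] sigma_neq[OF w(1)] sigma_neq[OF q(1)]
    unfolding c_def w'_def d_def by auto
  have "{b, c, w} \<noteq> {b, w, q}" "{b, c, w} \<noteq> {q, d, w}" "{b, c, w} \<noteq> {w, w', z}"
    "{b, w, q} \<noteq> {q, d, w}" "{b, w, q} \<noteq> {w, w', z}" "{q, d, w} \<noteq> {w, w', z}"
    using ne by blast+
  then have "distinct [{b, c, w}, {b, w, q}, {q, d, w}, {w, w', z}]" by simp
  then have star_w: "{T\<in>U. w \<in> T} = {{b, c, w}, {b, w, q}, {q, d, w}, {w, w', z}}"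
    by (rule triples_through_eq[OF w(1), rotated -1])
      (use star_b qdw T(1) z(1) c_def w'_def d_def in auto)
  show False
  proof (cases "z = c")
    case True
    then have "{T\<in>U. w \<in> T \<and> d \<in> T} = {{q, d, w}}" using star_w ne by blast
    then show False using codegree_not_one[OF w(1)] sigma_mem[OF q(1)] ne(10) unfolding d_def by blast
  next
    case False
    then have "{T\<in>U. w \<in> T \<and> c \<in> T} = {{b, c, w}}" using star_w ne z(2,3) by blast
    then show False using codegree_not_one[OF w(1)] sigma_mem[OF b] ne(2) unfolding c_def by blast
  qed
qed

end

definition col_shift :: "nat \<Rightarrow> nat \<Rightarrow> nat \<times> nat \<Rightarrow> nat \<times> nat" where
  "col_shift v t p = (fst p, (snd p + t) mod v)"

lemma col_shift_col_shift: "col_shift v s (col_shift v t p) = col_shift v ((t + s) mod v) p"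
  unfolding col_shift_def by (simp add: mod_simps add.assoc)

lemma col_shift_mem: "0 < v \<Longrightarrow> p \<in> A \<times> {..<v} \<Longrightarrow> col_shift v t p \<in> A \<times> {..<v}"
  unfolding col_shift_def by (auto simp: mem_Times_iff)

lemma inj_on_col_shift: "inj_on (col_shift v t) (A \<times> {..<v})"
proof
  fix p q assume "p \<in> A \<times> {..<v}" "q \<in> A \<times> {..<v}" "col_shift v t p = col_shift v t q"
  then have "fst p = fst q" "snd p < v" "snd q < v" "[snd p + t = snd q + t] (mod v)"
    unfolding col_shift_def cong_def by auto
  then show "p = q"
    by (metis cong_add_rcancel_nat cong_less_modulus_unique_nat prod_eq_iff)
qed

lemma mod_offset:
  fixes j c v :: nat
  assumes "j < v" "c < v"
  shows "(j + (c + v - j) mod v) mod v = c" and "(c + v - (c + v - j) mod v) mod v = j"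
proof -
  have t: "(c + v - j) mod v < v" using assms by simp
  have "((c + v - j) mod v + j) mod v = c" using add_mod_eq_iff[OF t assms] by simp
  then show "(j + (c + v - j) mod v) mod v = c" by (simp add: add.commute)
  then show "(c + v - (c + v - j) mod v) mod v = j" using add_mod_eq_iff[OF assms(1) t assms(2)] by simp
qed

locale cyclic_packing =
  fixes u v :: nat and F :: "(nat \<times> nat) set set"
  assumes v_pos: "0 < v"
    and base_block: "D \<in> F \<Longrightarrow> D \<subseteq> {..<u} \<times> {..<v} \<and> card D = 4"
    and shifts_meet: "\<lbrakk>D \<in> F; E \<in> F; s < v; t < v; (D, s) \<noteq> (E, t)\<rbrakk>
      \<Longrightarrow> card (col_shift v s ` D \<inter> col_shift v t ` E) \<le> 2"
begin

definition "blocks = F \<times> {..<v}"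
definition "block b = col_shift v (snd b) ` fst b"
definition "covered = {T. \<exists>b\<in>blocks. T \<subseteq> block b \<and> card T = 3}"
definition "leave = {T. T \<subseteq> {..<u} \<times> {..<v} \<and> card T = 3 \<and> T \<notin> covered}"
definition "block_count Q = card {b\<in>blocks. Q \<subseteq> block b}"

lemma finite_F: "finite F"
proof -
  have "F \<subseteq> Pow ({..<u} \<times> {..<v})" using base_block by blast
  then show ?thesis using finite_subset by blast
qed

lemma finite_blocks: "finite blocks"
  unfolding blocks_def using finite_F by simp

lemma block_subset:
  assumes "b \<in> blocks"
  shows "block b \<subseteq> {..<u} \<times> {..<v}"
proof -
  have "fst b \<in> F" using assms unfolding blocks_def by auto
  then have "fst b \<subseteq> {..<u} \<times> {..<v}" using base_block by blast
  then show ?thesis unfolding block_def using col_shift_mem[OF v_pos] by blast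
qed

lemma finite_block: "b \<in> blocks \<Longrightarrow> finite (block b)"
  using block_subset finite_subset by blast

lemma card_block:
  assumes "b \<in> blocks"
  shows "card (block b) = 4"
proof -
  have "fst b \<in> F" using assms unfolding blocks_def by auto
  then have "fst b \<subseteq> {..<u} \<times> {..<v}" "card (fst b) = 4" using base_block by auto
  then show ?thesis
    unfolding block_def by (simp add: card_image inj_on_subset[OF inj_on_col_shift])
qed

lemma card_block_inter:
  assumes "b \<in> blocks" "b' \<in> blocks" "b \<noteq> b'"
  shows "card (block b \<inter> block b') \<le> 2"
proof -
  have "fst b \<in> F" "fst b' \<in> F" "snd b < v" "snd b' < v" using assms(1,2) unfolding blocks_def by auto
  moreover have "(fst b, snd b) \<noteq> (fst b', snd b')" using assms(3) by simp
  ultimately show ?thesis unfolding block_def by (rule shifts_meet)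
qed

lemma covering_block_unique:
  assumes "b \<in> blocks" "b' \<in> blocks" "T \<subseteq> block b" "T \<subseteq> block b'" "card T = 3"
  shows "b = b'"
proof (rule ccontr)
  assume "b \<noteq> b'"
  then have "card (block b \<inter> block b') \<le> 2" using assms(1,2) card_block_inter by blast
  moreover have "card T \<le> card (block b \<inter> block b')"
    using assms(1,3,4) finite_block by (intro card_mono) auto
  ultimately show False using assms(5) by simp
qed

lemma card_covered_supersets:
  assumes "Q \<subseteq> {..<u} \<times> {..<v}" "card Q \<le> 3"
  shows "card {T\<in>covered. Q \<subseteq> T} = ((4 - card Q) choose (3 - card Q)) * block_count Q"
proof -
  let ?B = "{b\<in>blocks. Q \<subseteq> block b}"
  let ?S = "\<lambda>b. {T. T \<subseteq> block b \<and> card T = 3 \<and> Q \<subseteq> T}"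
  have "{T\<in>covered. Q \<subseteq> T} = (\<Union>b\<in>?B. ?S b)"
    unfolding covered_def by blast
  also have "card \<dots> = (\<Sum>b\<in>?B. card (?S b))"
  proof (rule card_UN_disjoint)
    show "finite ?B" using finite_blocks by simp
    show "\<forall>b\<in>?B. finite (?S b)" using finite_block by simp
    show "\<forall>b\<in>?B. \<forall>b'\<in>?B. b \<noteq> b' \<longrightarrow> ?S b \<inter> ?S b' = {}"
      using covering_block_unique by blast
  qed
  also have "\<dots> = (\<Sum>b\<in>?B. (4 - card Q) choose (3 - card Q))"
  proof (rule sum.cong)
    fix b assume "b \<in> ?B"
    then show "card (?S b) = (4 - card Q) choose (3 - card Q)"
      using card_supersets_of_card[OF finite_block _ assms(2)] card_block by simp
  qed simp
  finally show ?thesis unfolding block_count_def by simp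
qed

lemma card_leave_supersets:
  assumes "Q \<subseteq> {..<u} \<times> {..<v}" "card Q \<le> 3"
  shows "card {T\<in>leave. Q \<subseteq> T} + ((4 - card Q) choose (3 - card Q)) * block_count Q
    = (u * v - card Q) choose (3 - card Q)"
proof -
  let ?all = "{T. T \<subseteq> {..<u} \<times> {..<v} \<and> card T = 3 \<and> Q \<subseteq> T}"
  have split: "?all = {T\<in>leave. Q \<subseteq> T} \<union> {T\<in>covered. Q \<subseteq> T}"
    unfolding leave_def covered_def using block_subset by blast
  have "finite ?all" by simp
  then have "finite {T\<in>leave. Q \<subseteq> T}" "finite {T\<in>covered. Q \<subseteq> T}" unfolding split by auto
  then have "card ?all = card {T\<in>leave. Q \<subseteq> T} + card {T\<in>covered. Q \<subseteq> T}"
    unfolding split by (rule card_Un_disjoint) (auto simp: leave_def)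
  moreover have "card ?all = (u * v - card Q) choose (3 - card Q)"
    using card_supersets_of_card[OF _ assms] by (simp add: card_cartesian_product)
  ultimately show ?thesis using card_covered_supersets[OF assms] by simp
qed

lemma mem_block_iff:
  assumes "D \<in> F" "t < v" "c < v"
  shows "(i, c) \<in> block (D, t) \<longleftrightarrow> (i, (c + v - t) mod v) \<in> D"
proof
  assume "(i, c) \<in> block (D, t)"
  then obtain p where p: "p \<in> D" "fst p = i" "(snd p + t) mod v = c"
    unfolding block_def col_shift_def by auto
  have "snd p < v" using p(1) base_block[OF assms(1)] by auto
  then have "snd p = (c + v - t) mod v" using p(3) add_mod_eq_iff assms(2,3) by blast
  then show "(i, (c + v - t) mod v) \<in> D" using p(1,2) by (metis prod.collapse)
next
  assume "(i, (c + v - t) mod v) \<in> D"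
  moreover have "col_shift v t (i, (c + v - t) mod v) = (i, c)"
    unfolding col_shift_def using mod_offset(1)[of "(c + v - t) mod v" v c] mod_offset(2) assms v_pos
    by (simp add: add.commute)
  ultimately show "(i, c) \<in> block (D, t)" unfolding block_def by force
qed

lemma column_sum_block_count:
  assumes "c < v"
  shows "(\<Sum>i<u. block_count {(i, c)}) = 4 * card F"
proof -
  let ?S = "\<lambda>i. {b\<in>blocks. {(i, c)} \<subseteq> block b}"
  let ?f = "\<lambda>(i, b). (fst b, i, (c + v - snd b) mod v)"
  let ?g = "\<lambda>(D, p). (fst p, D, (c + v - snd p) mod v)"
  have S: "(D, t) \<in> blocks \<and> (i, c) \<in> block (D, t) \<longleftrightarrow> D \<in> F \<and> t < v \<and> (i, (c + v - t) mod v) \<in> D"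
    for i D t using mem_block_iff[OF _ _ assms] by (auto simp: blocks_def)
  have grid: "i < u" "j < v" if "D \<in> F" "(i, j) \<in> D" for D i j
    using base_block[OF that(1)] that(2) by auto
  have "(\<Sum>i<u. block_count {(i, c)}) = card (Sigma {..<u} ?S)"
    unfolding block_count_def using finite_blocks by simp
  also have "\<dots> = card (Sigma F (\<lambda>D. D))"
  proof (rule bij_betw_same_card, rule bij_betw_byWitness)
    show "\<forall>a\<in>Sigma {..<u} ?S. ?g (?f a) = a"
      using mod_offset(2)[OF _ assms] by (auto simp: blocks_def)
    show "\<forall>a\<in>Sigma F (\<lambda>D. D). ?f (?g a) = a"
      using mod_offset(2)[OF _ assms] grid by auto
    show "?f ` Sigma {..<u} ?S \<subseteq> Sigma F (\<lambda>D. D)"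
    proof
      fix x assume "x \<in> ?f ` Sigma {..<u} ?S"
      then obtain i D t where "x = (D, i, (c + v - t) mod v)" "(D, t) \<in> blocks" "(i, c) \<in> block (D, t)"
        by auto
      then show "x \<in> Sigma F (\<lambda>D. D)" using S[of D t i] by simp
    qed
    show "?g ` Sigma F (\<lambda>D. D) \<subseteq> Sigma {..<u} ?S"
    proof
      fix x assume "x \<in> ?g ` Sigma F (\<lambda>D. D)"
      then obtain D i j where x: "x = (i, D, (c + v - j) mod v)" "D \<in> F" "(i, j) \<in> D" by auto
      then show "x \<in> Sigma {..<u} ?S"
        using grid[OF x(2,3)] mod_offset(2)[OF _ assms] v_pos by (simp add: S)
    qed
  qed
  also have "\<dots> = (\<Sum>D\<in>F. card D)"
    using finite_F base_block finite_subset[of _ "{..<u} \<times> {..<v}"] by (intro card_SigmaI) auto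
  also have "\<dots> = 4 * card F" using base_block by simp
  finally show ?thesis .
qed

lemma finite_leave: "finite leave"
proof -
  have "leave \<subseteq> Pow ({..<u} \<times> {..<v})" unfolding leave_def by blast
  then show ?thesis using finite_subset by blast
qed

lemma leave_degree:
  assumes "p \<in> {..<u} \<times> {..<v}"
  shows "card {T\<in>leave. p \<in> T} + 3 * block_count {p} = (u * v - 1) choose 2"
  using card_leave_supersets[of "{p}"] assms by (simp add: choose_two)

lemma leave_codegree:
  assumes "p \<in> {..<u} \<times> {..<v}" "q \<in> {..<u} \<times> {..<v}" "p \<noteq> q"
  shows "card {T\<in>leave. p \<in> T \<and> q \<in> T} + 2 * block_count {p, q} = u * v - 2"
  using card_leave_supersets[of "{p, q}"] assms by simp

lemma even_leave_codegree:
  assumes "even (u * v)" "p \<in> {..<u} \<times> {..<v}" "q \<in> {..<u} \<times> {..<v}" "p \<noteq> q"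
  shows "even (card {T\<in>leave. p \<in> T \<and> q \<in> T})"
  using leave_codegree[OF assms(2-4)] assms(1) by presburger

end

lemma half_add_mod_half_add:
  fixes t v :: nat
  assumes "even v" "t < v"
  shows "((t + v div 2) mod v + v div 2) mod v = t"
  using assms by (simp add: mod_simps add.assoc flip: mult_2)

lemma half_add_mod_neq:
  fixes t v :: nat
  assumes "even v" "t < v"
  shows "(t + v div 2) mod v \<noteq> t"
  using assms by (auto simp: mod_if elim!: evenE)

locale even_cyclic_packing = cyclic_packing +
  assumes v_even: "even v"
begin

abbreviation "half_turn \<equiv> col_shift v (v div 2)"

lemma half_turn_mem: "p \<in> {..<u} \<times> {..<v} \<Longrightarrow> half_turn p \<in> {..<u} \<times> {..<v}"
  using col_shift_mem[OF v_pos] .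

lemma half_turn_half_turn: "p \<in> {..<u} \<times> {..<v} \<Longrightarrow> half_turn (half_turn p) = p"
  unfolding col_shift_def using half_add_mod_half_add[OF v_even] by (auto simp: prod_eq_iff)

lemma half_turn_neq: "p \<in> {..<u} \<times> {..<v} \<Longrightarrow> half_turn p \<noteq> p"
  unfolding col_shift_def using half_add_mod_neq[OF v_even] by (auto simp: prod_eq_iff)

definition "turn b = (fst b, (snd b + v div 2) mod v)"

lemma turn_block:
  assumes "b \<in> blocks"
  shows "turn b \<in> blocks" "turn (turn b) = b" "turn b \<noteq> b" "block (turn b) = half_turn ` block b"
proof -
  have "snd b < v" using assms unfolding blocks_def by auto
  then show "turn b \<in> blocks" "turn (turn b) = b" "turn b \<noteq> b"
    using assms v_pos half_add_mod_half_add[OF v_even] half_add_mod_neq[OF v_even]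
    unfolding turn_def blocks_def by (auto simp: prod_eq_iff)
  show "block (turn b) = half_turn ` block b"
    unfolding block_def turn_def image_image col_shift_col_shift by simp
qed

lemma even_block_count_half_turn:
  assumes "p \<in> {..<u} \<times> {..<v}"
  shows "even (block_count {p, half_turn p})"
  unfolding block_count_def
proof (rule even_card_if_fixpoint_free_involution[where f = turn])
  show "finite {b\<in>blocks. {p, half_turn p} \<subseteq> block b}" using finite_blocks by simp
  fix b assume b: "b \<in> {b\<in>blocks. {p, half_turn p} \<subseteq> block b}"
  then have "{half_turn p, half_turn (half_turn p)} \<subseteq> block (turn b)"
    using turn_block(4) by auto
  then have "{p, half_turn p} \<subseteq> block (turn b)" using half_turn_half_turn[OF assms] by auto
  then show "turn b \<in> {b\<in>blocks. {p, half_turn p} \<subseteq> block b} \<and> turn b \<noteq> b \<and> turn (turn b) = b"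
    using turn_block(1-3) b by simp
qed

lemma half_turn_image_leave:
  assumes "T \<in> leave"
  shows "half_turn ` T \<in> leave"
proof -
  have T: "T \<subseteq> {..<u} \<times> {..<v}" "card T = 3" "T \<notin> covered" using assms unfolding leave_def by auto
  have inj: "inj_on half_turn T" using inj_on_subset[OF inj_on_col_shift T(1)] .
  have turned_back: "half_turn ` half_turn ` T = T"
    using T(1) half_turn_half_turn by (force simp: image_image)
  have "half_turn ` T \<notin> covered"
  proof
    assume "half_turn ` T \<in> covered"
    then obtain b where b: "b \<in> blocks" "half_turn ` T \<subseteq> block b" unfolding covered_def by blast
    then have "T \<subseteq> block (turn b)" using turned_back turn_block(4)[OF b(1)] by (metis image_mono)
    then show False using T(2,3) turn_block(1)[OF b(1)] unfolding covered_def by blast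
  qed
  moreover have "half_turn ` T \<subseteq> {..<u} \<times> {..<v}" using T(1) half_turn_mem by blast
  ultimately show ?thesis using T(2) card_image[OF inj] unfolding leave_def by simp
qed

lemma two_le_half_turn_codegree:
  assumes "4 dvd u * v" "p \<in> {..<u} \<times> {..<v}"
  shows "2 \<le> card {T\<in>leave. p \<in> T \<and> half_turn p \<in> T}"
proof -
  have "card {T\<in>leave. p \<in> T \<and> half_turn p \<in> T} + 2 * block_count {p, half_turn p} = u * v - 2"
    using leave_codegree[OF assms(2) half_turn_mem[OF assms(2)] half_turn_neq[OF assms(2), symmetric]] .
  moreover obtain k where "u * v = 4 * k" using assms(1) by (rule dvdE)
  moreover have "0 < u * v" using assms(2) by auto
  moreover obtain j where "block_count {p, half_turn p} = 2 * j"
    using even_block_count_half_turn[OF assms(2)] by (rule evenE)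
  \<comment> \<open>so the codegree is \<open>2 (mod 4)\<close>\<close>
  ultimately show ?thesis by presburger
qed

lemma leave_degree_lower_bound:
  assumes "12 dvd u * v" "p \<in> {..<u} \<times> {..<v}"
  shows "3 * block_count {p} + 4 \<le> (u * v - 1) choose 2"
proof -
  have "0 < u * v" using assms(2) by auto
  moreover have "3 dvd u * v" using assms(1) by (rule dvd_trans[rotated]) simp
  ultimately have N: "((u * v - 1) choose 2) mod 3 = 1" by (intro choose_two_mod_three)
  have "4 dvd u * v" using assms(1) by (rule dvd_trans[rotated]) simp
  then have "2 \<le> card {T\<in>leave. p \<in> T \<and> half_turn p \<in> T}"
    using two_le_half_turn_codegree assms(2) by blast
  also have "\<dots> \<le> card {T\<in>leave. p \<in> T}" using finite_leave by (intro card_mono) auto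
  finally show ?thesis using N leave_degree[OF assms(2)] by presburger
qed

lemma leave_degree_eq_4_if_tight:
  assumes "12 dvd u * v" "u * (((u * v - 1) choose 2) - 4) \<le> 12 * card F"
    and "p \<in> {..<u} \<times> {..<v}"
  shows "card {T\<in>leave. p \<in> T} = 4"
proof -
  let ?N = "(u * v - 1) choose 2"
  obtain i c where p: "p = (i, c)" "i < u" "c < v" using assms(3) by auto
  have bound: "3 * block_count {(j, c)} \<le> ?N - 4" if "j < u" for j
    using leave_degree_lower_bound[OF assms(1), of "(j, c)"] that p(3) by simp
  have "3 * block_count {p} = ?N - 4"
  proof (rule ccontr)
    assume "3 * block_count {p} \<noteq> ?N - 4"
    then have "3 * block_count {(i, c)} < ?N - 4" using bound[OF p(2)] p(1) by simp
    then have "(\<Sum>j<u. 3 * block_count {(j, c)}) < (\<Sum>j<u. ?N - 4)"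
      using bound p(2) by (intro sum_strict_mono_ex1) auto
    moreover have "(\<Sum>j<u. 3 * block_count {(j, c)}) = 12 * card F"
      using column_sum_block_count[OF p(3)] by (simp add: sum_distrib_left[symmetric])
    ultimately show False using assms(2) by simp
  qed
  then show ?thesis
    using leave_degree[OF assms(3)] leave_degree_lower_bound[OF assms(1,3)] by simp
qed

lemma leave_is_quartic_even_triple_system:
  assumes "12 dvd u * v" "\<And>p. p \<in> {..<u} \<times> {..<v} \<Longrightarrow> card {T\<in>leave. p \<in> T} = 4"
  shows "quartic_even_triple_system leave ({..<u} \<times> {..<v}) half_turn"
proof
  have "4 dvd u * v" using assms(1) by (rule dvd_trans[rotated]) simp
  then have "even (u * v)" by (rule dvd_trans[rotated]) simp
  fix T p q
  show "finite leave" by (rule finite_leave)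
  show "T \<in> leave \<Longrightarrow> card T = 3 \<and> T \<subseteq> {..<u} \<times> {..<v}" unfolding leave_def by simp
  show "T \<in> leave \<Longrightarrow> half_turn ` T \<in> leave" by (rule half_turn_image_leave)
  assume p: "p \<in> {..<u} \<times> {..<v}"
  show "half_turn p \<in> {..<u} \<times> {..<v} \<and> half_turn (half_turn p) = p \<and> half_turn p \<noteq> p"
    using half_turn_mem half_turn_half_turn half_turn_neq p by blast
  show "card {T\<in>leave. p \<in> T} = 4" using assms(2) p .
  show "q \<in> {..<u} \<times> {..<v} \<Longrightarrow> p \<noteq> q \<Longrightarrow> even (card {T\<in>leave. p \<in> T \<and> q \<in> T})"
    using even_leave_codegree \<open>even (u * v)\<close> p by blast
  have "2 \<le> card {T\<in>leave. p \<in> T \<and> half_turn p \<in> T}"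
    using two_le_half_turn_codegree \<open>4 dvd u * v\<close> p by blast
  then have "{T\<in>leave. p \<in> T \<and> half_turn p \<in> T} \<noteq> {}" by (intro notI) simp
  then show "\<exists>T\<in>leave. p \<in> T \<and> half_turn p \<in> T" by blast
qed

theorem twelve_card_base_blocks_less:
  assumes "0 < u" "12 dvd u * v"
  shows "12 * card F < u * (((u * v - 1) choose 2) - 4)"
proof (rule ccontr)
  assume "\<not> ?thesis"
  then have "card {T\<in>leave. p \<in> T} = 4" if "p \<in> {..<u} \<times> {..<v}" for p
    using leave_degree_eq_4_if_tight[OF assms(2) _ that] by simp
  then interpret quartic_even_triple_system leave "{..<u} \<times> {..<v}" half_turn
    by (rule leave_is_quartic_even_triple_system[OF assms(2)])
  have "(0, 0) \<in> {..<u} \<times> {..<v}" using assms(1) v_pos by simp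
  then show False using no_points by simp
qed

end

definition support :: "(nat \<Rightarrow> nat \<Rightarrow> nat) \<Rightarrow> (nat \<times> nat) set" where
  "support A = {p. A (fst p) (snd p) = 1}"

lemma support_subset:
  assumes "is01mat u v A"
  shows "support A \<subseteq> {..<u} \<times> {..<v}"
proof
  fix p assume "p \<in> support A"
  then have "A (fst p) (snd p) \<noteq> 0" unfolding support_def by simp
  then have "fst p < u" "snd p < v" using assms unfolding is01mat_def by (meson leI)+
  then show "p \<in> {..<u} \<times> {..<v}" by (simp add: mem_Times_iff)
qed

lemma eq_support_imp_eq:
  assumes "is01mat u v A" "is01mat u v B" "support A = support B"
  shows "A = B"
proof (intro ext)
  fix i j
  have "A i j \<in> {0, 1}" "B i j \<in> {0, 1}" using assms(1,2) unfolding is01mat_def by auto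
  moreover have "(i, j) \<in> support A \<longleftrightarrow> (i, j) \<in> support B" using assms(3) by simp
  then have "A i j = 1 \<longleftrightarrow> B i j = 1" unfolding support_def by simp
  ultimately show "A i j = B i j" by auto
qed

lemma sum_01_eq_card:
  assumes "finite X" "\<And>p. p \<in> X \<Longrightarrow> f p \<in> {0, 1::nat}"
  shows "(\<Sum>p\<in>X. f p) = card {p\<in>X. f p = 1}"
proof -
  have "(\<Sum>p\<in>X. f p) = (\<Sum>p\<in>X. if f p = 1 then 1 else 0)"
    using assms(2) by (intro sum.cong) auto
  also have "\<dots> = card {p\<in>X. f p = 1}" using assms(1) by (simp add: sum.If_cases Int_def)
  finally show ?thesis .
qed

lemma hweight_eq_card_support:
  assumes "is01mat u v A"
  shows "hweight u v A = card (support A)"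
proof -
  have "hweight u v A = (\<Sum>p\<in>{..<u} \<times> {..<v}. A (fst p) (snd p))"
    unfolding hweight_def by (simp add: sum.cartesian_product case_prod_beta)
  also have "\<dots> = card {p\<in>{..<u} \<times> {..<v}. A (fst p) (snd p) = 1}"
    using assms unfolding is01mat_def by (intro sum_01_eq_card) auto
  also have "{p\<in>{..<u} \<times> {..<v}. A (fst p) (snd p) = 1} = support A"
    using support_subset[OF assms] unfolding support_def by blast
  finally show ?thesis .
qed

lemma corr_eq_card:
  assumes "is01mat u v A" "is01mat u v B"
  shows "corr u v A B r = card {p\<in>support A. (fst p, nat ((int (snd p) + r) mod int v)) \<in> support B}"
proof -
  let ?f = "\<lambda>p. A (fst p) (snd p) * B (fst p) (nat ((int (snd p) + r) mod int v))"
  have "corr u v A B r = (\<Sum>p\<in>{..<u} \<times> {..<v}. ?f p)"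
    unfolding corr_def by (simp add: sum.cartesian_product case_prod_beta)
  also have "\<dots> = card {p\<in>{..<u} \<times> {..<v}. ?f p = 1}"
  proof (rule sum_01_eq_card)
    fix p
    have "A (fst p) (snd p) \<in> {0, 1}" "B (fst p) (nat ((int (snd p) + r) mod int v)) \<in> {0, 1}"
      using assms unfolding is01mat_def by blast+
    then show "?f p \<in> {0, 1}" by auto
  qed simp
  also have "{p\<in>{..<u} \<times> {..<v}. ?f p = 1}
      = {p\<in>support A. (fst p, nat ((int (snd p) + r) mod int v)) \<in> support B}"
    using support_subset[OF assms(1)] unfolding support_def by auto
  finally show ?thesis .
qed

lemma col_shift_image_inter:
  assumes "E \<subseteq> X \<times> {..<v}"
  shows "col_shift v s ` D \<inter> col_shift v t ` E
    = col_shift v s ` {p\<in>D. (fst p, nat ((int (snd p) + (int s - int t)) mod int v)) \<in> E}"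
    (is "_ = col_shift v s ` {p\<in>D. ?partner p \<in> E}")
proof -
  have partner: "col_shift v s p = col_shift v t q \<longleftrightarrow> q = ?partner p" if "q \<in> E" for p q
  proof -
    have "snd q < v" using that assms by auto
    then have "(snd p + s) mod v = (snd q + t) mod v
        \<longleftrightarrow> int (snd q) = (int (snd p) + (int s - int t)) mod int v"
      by (rule add_mod_eq_add_mod_iff)
    also have "\<dots> \<longleftrightarrow> snd q = nat ((int (snd p) + (int s - int t)) mod int v)"
      using \<open>snd q < v\<close> by (auto simp: nat_eq_iff2)
    finally show ?thesis unfolding col_shift_def by (auto simp: prod_eq_iff)
  qed
  show ?thesis
  proof (intro equalityI subsetI)
    fix z assume "z \<in> col_shift v s ` D \<inter> col_shift v t ` E"
    then obtain p q where pq: "p \<in> D" "q \<in> E" "z = col_shift v s p" "col_shift v s p = col_shift v t q"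
      by auto
    then have "?partner p \<in> E" using partner[OF pq(2), of p] by simp
    with pq(1,3) show "z \<in> col_shift v s ` {p\<in>D. ?partner p \<in> E}" by blast
  next
    fix z assume "z \<in> col_shift v s ` {p\<in>D. ?partner p \<in> E}"
    then obtain p where p: "p \<in> D" "?partner p \<in> E" "z = col_shift v s p" by auto
    then have "z = col_shift v t (?partner p)" using partner[OF p(2)] by simp
    with p show "z \<in> col_shift v s ` D \<inter> col_shift v t ` E" by blast
  qed
qed

lemma cyclic_packing_supports:
  assumes "is_OOC u v C" "0 < v"
  shows "cyclic_packing u v (support ` C)"
proof
  have code: "is01mat u v A" "hweight u v A = 4" if "A \<in> C" for A
    using assms(1) that unfolding is_OOC_def by auto
  show "0 < v" by (rule assms(2))
  fix D assume "D \<in> support ` C"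
  then obtain A where "A \<in> C" "D = support A" by blast
  then show "D \<subseteq> {..<u} \<times> {..<v} \<and> card D = 4"
    using support_subset[OF code(1)] hweight_eq_card_support[OF code(1)] code(2) by simp
next
  fix D E s t assume DE: "D \<in> support ` C" "E \<in> support ` C"
    and st: "s < v" "t < v" "(D, s) \<noteq> (E, t)"
  obtain A B where A: "A \<in> C" "D = support A" and B: "B \<in> C" "E = support B"
    using DE by blast
  have code: "is01mat u v A" "is01mat u v B" using assms(1) A(1) B(1) unfolding is_OOC_def by auto
  define r where "r = int s - int t"
  have "A \<noteq> B \<or> \<not> r mod int v = 0"
  proof (cases "D = E")
    case True
    then have "r \<noteq> 0" "\<bar>r\<bar> < int v" using st unfolding r_def by auto
    then have "\<not> int v dvd r" using dvd_imp_le_int[of r "int v"] by auto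
    then show ?thesis by (simp add: dvd_eq_mod_eq_0)
  next
    case False
    then show ?thesis using A B by auto
  qed
  then have "corr u v A B r \<le> 2" using assms(1) A(1) B(1) unfolding is_OOC_def by blast
  moreover have "card (col_shift v s ` D \<inter> col_shift v t ` E) = corr u v A B r"
  proof -
    let ?X = "{p\<in>D. (fst p, nat ((int (snd p) + r) mod int v)) \<in> E}"
    have "?X \<subseteq> {..<u} \<times> {..<v}" using support_subset[OF code(1)] A(2) by blast
    then have "card (col_shift v s ` ?X) = card ?X"
      by (rule card_image[OF inj_on_subset[OF inj_on_col_shift]])
    then show ?thesis
      using col_shift_image_inter[OF support_subset[OF code(2)], of s D t] corr_eq_card[OF code] A(2) B(2)
      unfolding r_def by simp
  qed
  ultimately show "card (col_shift v s ` D \<inter> col_shift v t ` E) \<le> 2" by simp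
qed

lemma twelve_Phi_less:
  assumes "0 < u" "0 < v" "even v" "12 dvd u * v"
  shows "12 * Phi u v < u * (((u * v - 1) choose 2) - 4)"
proof -
  have bound: "12 * card C < u * (((u * v - 1) choose 2) - 4)" if C: "is_OOC u v C" for C
  proof -
    interpret even_cyclic_packing u v "support ` C"
      using cyclic_packing_supports[OF C assms(2)] assms(3)
      by (simp add: even_cyclic_packing_def even_cyclic_packing_axioms_def)
    have "inj_on support C" using eq_support_imp_eq C unfolding is_OOC_def inj_on_def by blast
    then show ?thesis using twelve_card_base_blocks_less[OF assms(1,4)] by (simp add: card_image)
  qed
  let ?sizes = "{card C | C. is_OOC u v C}"
  have "is_OOC u v {}" unfolding is_OOC_def by simp
  then have "?sizes \<noteq> {}" by blast
  moreover have "?sizes \<subseteq> {..<u * (((u * v - 1) choose 2) - 4)}" using bound by fastforce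
  then have "finite ?sizes" by (rule finite_subset) simp
  ultimately have "Phi u v \<in> ?sizes" unfolding Phi_def by (intro Max_in)
  then show ?thesis using bound by auto
qed

theorem lemma5p2:
  fixes u v :: nat
  assumes "u > 0" and "u mod 12 = 0" and "v mod 6 = 2 \<or> v mod 6 = 4"
  shows "int (Phi u v) \<le>
    \<lfloor> real u / 4 * (real_of_int \<lfloor> (real (u * v) - 1) / 3
        * real_of_int \<lfloor> (real (u * v) - 2) / 2 \<rfloor> \<rfloor> - 1) \<rfloor> - 1"
proof -
  define N where "N = (u * v - 1) choose 2"
  obtain a where a: "u = 12 * a" using assms(2) by auto
  have v: "0 < v" "even v" using assms(3) by presburger+
  have uv: "0 < u * v" "12 dvd u * v" "even (u * v)" "2 \<le> u * v" using assms(1) v a by auto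
  have "12 * Phi u v < 12 * a * (N - 4)" using twelve_Phi_less[OF assms(1) v uv(2)] a N_def by simp
  moreover have "N - 4 = 3 * (N div 3 - 1)"
    using choose_two_mod_three[of "u * v"] uv(1,2) unfolding N_def by presburger
  ultimately have Phi: "Phi u v < 3 * a * (N div 3 - 1)" by simp
  then have K: "1 \<le> N div 3" by (cases "N div 3") auto
  have inner: "\<lfloor>(real (u * v) - 1) / 3 * real_of_int \<lfloor>(real (u * v) - 2) / 2\<rfloor>\<rfloor> = int (N div 3)"
    using floor_choose_two_div_three[OF uv(3,4)] unfolding N_def .
  have "real u / 4 * (real_of_int (int (N div 3)) - 1) = real (3 * a * (N div 3 - 1))"
    using a K by (simp add: of_nat_diff)
  then have outer: "\<lfloor>real u / 4 * (real_of_int (int (N div 3)) - 1)\<rfloor> = int (3 * a * (N div 3 - 1))"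
    by (simp only: floor_of_nat)
  have "int (Phi u v) < int (3 * a * (N div 3 - 1))" using Phi by (simp only: of_nat_less_iff)
  then show ?thesis unfolding inner outer by linarith
qed

end
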